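(* Let $\langle L,\leq\rangle$ and $\langle K,\leq\rangle$ be complete lattices and $f:L\to K$ a surjective lattice morphism. Let $O:L\to L$ be an operator and $A:L^2\to L^2$ an approximator of $O$ such that $O$ respects $f$ and $A$ respects $f$, and let $A_f:K^2\to K^2$ be the projection of $A$ on $K$. If $(x_j,y_j)_{j\leq\alpha}$ is a well-founded induction of $A$, then $(f(x_j),f(y_j))_{j\leq\alpha}$ is a well-founded induction of $A_f$. Moreover, if $(x_j,y_j)_{j\leq\alpha}$ is terminal, then so is $(f(x_j),f(y_j))_{j\leq\alpha}$.
   Context: A lattice morphism $f:L\to K$ satisfies $f(\bigvee X)=\bigvee f(X)$ and $f(\bigwedge X)=\bigwedge f(X)$ for all $X\subseteq L$. For a complete lattice $L$ with least element $\bot$ and greatest element $\top$, the bilattice $L^2$ carries the precision order $(x,y)\leq_p(u,v)$ iff $x\leq u$ and $v\leq y$; it is a complete lattice. Write $(x,y)_1=x$, $(x,y)_2=y$. An approximator of $O:L\to L$ is a $\leq_p$-monotone operator $A:L^2\to L^2$ with $A(x,x)_1\leq O(x)\leq A(x,x)_2$ for all $x$; approximators are assumed symmetric, i.e. $A(x,y)_1=A(y,x)_2$. An operator $O$ respects $f$ if $f(x)=f(y)$ implies $f(O(x))=f(O(y))$. Let $f^2:L^2\to K^2$, $(x,y)\mapsto(f(x),f(y))$. $A$ respects $f$ if for all $p,q\in L^2$ with $f^2(p)=f^2(q)$ we have $f^2(A(p))=f^2(A(q))$; in that case (with $f$ surjective) the projection $A_f$ is the unique operator $K^2\to K^2$ with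 $A_f\circ f^2=f^2\circ A$. For an operator $B$ on a bilattice $M^2$, a $B$-refinement of $(x,y)$ is a pair $(x',y')$ such that either (i) $(x,y)\leq_p(x',y')\leq_p B(x,y)$ (application refinement), or (ii) $x'=x$ and $B(x,y')_2\leq y'\leq y$ (unfoundedness refinement); it is strict if $(x',y')\neq(x,y)$. A well-founded induction of $B$ is a sequence $(x_i,y_i)_{i\leq\beta}$, $\beta$ an ordinal, with $(x_0,y_0)=(\bot,\top)$, $(x_{i+1},y_{i+1})$ a $B$-refinement of $(x_i,y_i)$ for all $i<\beta$, and $(x_\lambda,y_\lambda)=\bigvee_{\leq_p}\{(x_i,y_i)\mid i<\lambda\}$ for each limit ordinal $\lambda\leq\beta$. It is terminal if $(x_\beta,y_\beta)$ has no strict $B$-refinement. *)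

theory Defs
  imports Main
begin

definition lattice_morphism :: "('a::complete_lattice \<Rightarrow> 'b::complete_lattice) \<Rightarrow> bool" where
  "lattice_morphism f \<longleftrightarrow> (\<forall>X. f (Sup X) = Sup (f ` X) \<and> f (Inf X) = Inf (f ` X))"

definition leq_p :: "'a::complete_lattice \<times> 'a \<Rightarrow> 'a \<times> 'a \<Rightarrow> bool" where
  "leq_p p q \<longleftrightarrow> fst p \<le> fst q \<and> snd q \<le> snd p"

definition Sup_p :: "('a::complete_lattice \<times> 'a) set \<Rightarrow> 'a \<times> 'a" where
  "Sup_p S = (Sup (fst ` S), Inf (snd ` S))"

definition pmap :: "('a \<Rightarrow> 'b) \<Rightarrow> 'a \<times> 'a \<Rightarrow> 'b \<times> 'b" where
  "pmap f p = (f (fst p), f (snd p))"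

definition approximator ::
  "('a::complete_lattice \<Rightarrow> 'a) \<Rightarrow> ('a \<times> 'a \<Rightarrow> 'a \<times> 'a) \<Rightarrow> bool" where
  "approximator Op A \<longleftrightarrow>
     (\<forall>p q. leq_p p q \<longrightarrow> leq_p (A p) (A q)) \<and>
     (\<forall>x. fst (A (x, x)) \<le> Op x \<and> Op x \<le> snd (A (x, x))) \<and>
     (\<forall>x y. fst (A (x, y)) = snd (A (y, x)))"

definition op_respects :: "('a \<Rightarrow> 'a) \<Rightarrow> ('a \<Rightarrow> 'b) \<Rightarrow> bool" where
  "op_respects Op f \<longleftrightarrow> (\<forall>x y. f x = f y \<longrightarrow> f (Op x) = f (Op y))"

definition approx_respects :: "('a \<times> 'a \<Rightarrow> 'a \<times> 'a) \<Rightarrow> ('a \<Rightarrow> 'b) \<Rightarrow> bool" where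
  "approx_respects A f \<longleftrightarrow> (\<forall>p q. pmap f p = pmap f q \<longrightarrow> pmap f (A p) = pmap f (A q))"

definition refinement ::
  "('a::complete_lattice \<times> 'a \<Rightarrow> 'a \<times> 'a) \<Rightarrow> 'a \<times> 'a \<Rightarrow> 'a \<times> 'a \<Rightarrow> bool" where
  "refinement B p q \<longleftrightarrow>
     (leq_p p q \<and> leq_p q (B p)) \<or>
     (fst q = fst p \<and> snd (B (fst p, snd q)) \<le> snd q \<and> snd q \<le> snd p)"

definition strict_refinement ::
  "('a::complete_lattice \<times> 'a \<Rightarrow> 'a \<times> 'a) \<Rightarrow> 'a \<times> 'a \<Rightarrow> 'a \<times> 'a \<Rightarrow> bool" where
  "strict_refinement B p q \<longleftrightarrow> refinement B p q \<and> q \<noteq> p"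

text \<open>Ordinals are modelled by an index type of class wellorder: the sequence
  indexed by the ordinals \<open>\<le> \<beta>\<close> is \<open>s\<close> restricted to \<open>{i. i \<le> beta}\<close>.\<close>

definition ord_zero :: "'i::wellorder" where
  "ord_zero = (LEAST i. True)"

definition ord_succ :: "'i::wellorder \<Rightarrow> 'i" where
  "ord_succ i = (LEAST j. i < j)"

definition ord_limit :: "'i::wellorder \<Rightarrow> bool" where
  "ord_limit l \<longleftrightarrow> (\<exists>j. j < l) \<and> (\<forall>j. j < l \<longrightarrow> (\<exists>k. j < k \<and> k < l))"

definition wf_induction ::
  "('a::complete_lattice \<times> 'a \<Rightarrow> 'a \<times> 'a) \<Rightarrow> ('i::wellorder \<Rightarrow> 'a \<times> 'a) \<Rightarrow> 'i \<Rightarrow> bool" where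
  "wf_induction B s beta \<longleftrightarrow>
     s ord_zero = (bot, top) \<and>
     (\<forall>i. i < beta \<longrightarrow> refinement B (s i) (s (ord_succ i))) \<and>
     (\<forall>l. l \<le> beta \<and> ord_limit l \<longrightarrow> s l = Sup_p (s ` {i. i < l}))"

definition terminal_wf_induction ::
  "('a::complete_lattice \<times> 'a \<Rightarrow> 'a \<times> 'a) \<Rightarrow> ('i::wellorder \<Rightarrow> 'a \<times> 'a) \<Rightarrow> 'i \<Rightarrow> bool" where
  "terminal_wf_induction B s beta \<longleftrightarrow>
     wf_induction B s beta \<and> \<not> (\<exists>q. strict_refinement B (s beta) q)"

end

theory Submission
  imports Defs
begin

text \<open>Transferring a well-founded induction along \<open>f\<close> is routine: \<open>f\<close> is monotone, preserves
  \<open>Sup_p\<close>, and \<open>A\<^sub>f \<circ> f\<^sup>2 = f\<^sup>2 \<circ> A\<close>. For terminality we lift a strict \<open>A\<^sub>f\<close>-refinement of \<open>f\<^sup>2(x, y)\<close>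
  back to a strict \<open>A\<close>-refinement of \<open>(x, y)\<close>. Every stage of a well-founded induction of a
  monotone \<open>A\<close> is \<open>A\<close>-reliable, i.e. \<open>(x, y) \<le>\<^sub>p A(x, y)\<close>, so the bounds of an application refinement
  form nonempty intervals, and surjectivity together with preservation of binary joins and meets
  yields preimages inside them. For an unfoundedness refinement \<open>(f x, v)\<close> we take the largest
  \<open>w \<le> y\<close> with \<open>f w \<le> v\<close>; then \<open>f w = v\<close>, and the bound \<open>A(x, w)\<^sub>2\<close> lies below \<open>A(x, y)\<^sub>2 \<le> y\<close>
  and is mapped to \<open>A\<^sub>f(f x, v)\<^sub>2 \<le> v\<close>, hence lies below \<open>w\<close>.\<close>

lemma lattice_morphism_sup: "lattice_morphism f \<Longrightarrow> f (sup a b) = sup (f a) (f b)"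
  unfolding lattice_morphism_def by (metis Sup_insert Sup_empty image_insert sup_bot.right_neutral)

lemma lattice_morphism_inf: "lattice_morphism f \<Longrightarrow> f (inf a b) = inf (f a) (f b)"
  unfolding lattice_morphism_def by (metis Inf_insert Inf_empty image_insert inf_top.right_neutral)

lemma lattice_morphism_mono: "lattice_morphism f \<Longrightarrow> mono f"
  by (rule monoI) (metis lattice_morphism_sup sup.absorb_iff2)

lemma lattice_morphism_bot: "lattice_morphism f \<Longrightarrow> f bot = bot"
  unfolding lattice_morphism_def by (metis Sup_empty image_empty)

lemma lattice_morphism_top: "lattice_morphism f \<Longrightarrow> f top = top"
  unfolding lattice_morphism_def by (metis Inf_empty image_empty)

lemma lattice_morphism_interval_preimage:
  assumes f: "lattice_morphism f" "surj f"
    and "a \<le> b" "f a \<le> u" "u \<le> f b"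
  obtains x where "a \<le> x" "x \<le> b" "f x = u"
proof -
  obtain u0 where u0: "f u0 = u" using \<open>surj f\<close> by (metis surjD)
  have "a \<le> inf (sup a u0) b" "inf (sup a u0) b \<le> b"
    using \<open>a \<le> b\<close> by auto
  moreover have "f (inf (sup a u0) b) = u"
    using assms u0 by (simp add: lattice_morphism_inf lattice_morphism_sup sup.absorb2 inf.absorb1)
  ultimately show ?thesis using that by blast
qed

lemma lattice_morphism_greatest_preimage_below:
  assumes f: "lattice_morphism f" "surj f"
    and "v \<le> f y"
  obtains w where "w \<le> y" "f w = v" "\<And>z. z \<le> y \<Longrightarrow> f z \<le> v \<Longrightarrow> z \<le> w"
proof -
  let ?w = "Sup {z. z \<le> y \<and> f z \<le> v}"
  have "?w \<le> y" and greatest: "\<And>z. z \<le> y \<Longrightarrow> f z \<le> v \<Longrightarrow> z \<le> ?w"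
    by (auto intro: Sup_least Sup_upper)
  have "f ?w \<le> v"
    using f(1) unfolding lattice_morphism_def by (auto intro!: Sup_least)
  moreover obtain z where "z \<le> y" "f z = v"
    using lattice_morphism_interval_preimage[OF f, of bot y v] assms
    by (auto simp: lattice_morphism_bot)
  then have "v \<le> f ?w"
    using greatest[of z] lattice_morphism_mono[OF f(1)] by (auto dest: monoD)
  ultimately have "f ?w = v" by simp
  with \<open>?w \<le> y\<close> greatest show ?thesis using that by blast
qed

lemma ord_cases:
  fixes i :: "'i::wellorder"
  obtains "i = ord_zero" | j where "j < i" "ord_succ j = i" | "ord_limit i"
proof -
  have "ord_limit i" if nz: "i \<noteq> ord_zero" and ns: "\<not> (\<exists>j. j < i \<and> ord_succ j = i)"
  proof -
    have "ord_zero \<le> i" unfolding ord_zero_def by (rule Least_le) simp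
    with nz have "ord_zero < i" by simp
    moreover have "\<exists>k. j < k \<and> k < i" if "j < i" for j
    proof (rule ccontr)
      assume "\<not> (\<exists>k. j < k \<and> k < i)"
      then have "ord_succ j = i" unfolding ord_succ_def
        by (intro Least_equality) (use \<open>j < i\<close> in \<open>auto simp: not_less\<close>, metis not_le)
      with \<open>j < i\<close> ns show False by blast
    qed
    ultimately show ?thesis unfolding ord_limit_def by blast
  qed
  then show ?thesis using that by blast
qed

definition reliable :: "('a::complete_lattice \<times> 'a \<Rightarrow> 'a \<times> 'a) \<Rightarrow> 'a \<times> 'a \<Rightarrow> bool" where
  "reliable A p \<longleftrightarrow> leq_p p (A p)"

lemma leq_p_trans: "leq_p p q \<Longrightarrow> leq_p q r \<Longrightarrow> leq_p p r"
  unfolding leq_p_def by (meson order_trans)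

lemma leq_p_Sup_p: "p \<in> S \<Longrightarrow> leq_p p (Sup_p S)"
  unfolding leq_p_def Sup_p_def by (auto intro: Sup_upper Inf_lower)

lemma Sup_p_leq_p: "(\<And>p. p \<in> S \<Longrightarrow> leq_p p q) \<Longrightarrow> leq_p (Sup_p S) q"
  unfolding leq_p_def Sup_p_def by (auto intro: Sup_least Inf_greatest)

lemma refinement_leq_p: "refinement B p q \<Longrightarrow> leq_p p q"
  unfolding refinement_def leq_p_def by auto

lemma refinement_reliable:
  assumes mono: "\<And>p q. leq_p p q \<Longrightarrow> leq_p (B p) (B q)"
    and "reliable B p" and r: "refinement B p q"
  shows "reliable B q"
  using r[unfolded refinement_def]
proof
  assume "leq_p p q \<and> leq_p q (B p)"
  then show ?thesis unfolding reliable_def by (meson leq_p_trans mono)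
next
  assume u: "fst q = fst p \<and> snd (B (fst p, snd q)) \<le> snd q \<and> snd q \<le> snd p"
  then have "B (fst p, snd q) = B q" by (metis prod.collapse)
  moreover have "leq_p (B p) (B q)" using mono[OF refinement_leq_p[OF r]] .
  ultimately show ?thesis
    using u \<open>reliable B p\<close> unfolding reliable_def leq_p_def by (metis order_trans)
qed

lemma wf_induction_reliable:
  fixes s :: "'i::wellorder \<Rightarrow> 'a::complete_lattice \<times> 'a"
  assumes mono: "\<And>p q. leq_p p q \<Longrightarrow> leq_p (B p) (B q)"
    and wf: "wf_induction B s beta"
  shows "i \<le> beta \<Longrightarrow> reliable B (s i)"
proof (induction i rule: less_induct)
  case (less i)
  note wfd = wf[unfolded wf_induction_def]
  show ?case
  proof (cases i rule: ord_cases)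
    case 1
    then show ?thesis using wfd by (simp add: reliable_def leq_p_def)
  next
    case (2 j)
    have "reliable B (s j)" using less.IH[of j] 2 less.prems by simp
    moreover have "refinement B (s j) (s i)" using wfd 2 less.prems by auto
    ultimately show ?thesis using refinement_reliable mono by blast
  next
    case 3
    then have si: "s i = Sup_p (s ` {j. j < i})" using wfd less.prems by auto
    have "leq_p (s j) (B (s i))" if "j < i" for j
    proof -
      have "leq_p (s j) (s i)" unfolding si using that by (intro leq_p_Sup_p) simp
      then have "leq_p (B (s j)) (B (s i))" by (rule mono)
      moreover have "reliable B (s j)" using less.IH that less.prems by simp
      ultimately show ?thesis unfolding reliable_def by (blast intro: leq_p_trans)
    qed
    then show ?thesis
      unfolding reliable_def by (subst si, intro Sup_p_leq_p) auto
  qed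
qed

lemma pmap_leq_p: "mono f \<Longrightarrow> leq_p p q \<Longrightarrow> leq_p (pmap f p) (pmap f q)"
  unfolding leq_p_def pmap_def by (auto intro: monoD)

lemma pmap_Sup_p: "lattice_morphism f \<Longrightarrow> pmap f (Sup_p S) = Sup_p (pmap f ` S)"
  unfolding lattice_morphism_def pmap_def Sup_p_def by (simp add: image_image)

lemma refinement_pmap:
  assumes "mono f" and c: "Bf \<circ> pmap f = pmap f \<circ> B"
    and r: "refinement B p q"
  shows "refinement Bf (pmap f p) (pmap f q)"
proof -
  have Bf: "Bf (pmap f p') = pmap f (B p')" for p' using c by (metis comp_apply)
  from r[unfolded refinement_def] show ?thesis
  proof
    assume "leq_p p q \<and> leq_p q (B p)"
    then show ?thesis using pmap_leq_p[OF \<open>mono f\<close>] Bf unfolding refinement_def by metis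
  next
    assume "fst q = fst p \<and> snd (B (fst p, snd q)) \<le> snd q \<and> snd q \<le> snd p"
    moreover have "Bf (fst (pmap f p), snd (pmap f q)) = pmap f (B (fst p, snd q))"
      using Bf[of "(fst p, snd q)"] by (simp add: pmap_def)
    ultimately show ?thesis
      using \<open>mono f\<close> unfolding pmap_def refinement_def by (auto intro: monoD)
  qed
qed

lemma wf_induction_pmap:
  assumes f: "lattice_morphism f" and c: "Bf \<circ> pmap f = pmap f \<circ> B"
    and wf: "wf_induction B s beta"
  shows "wf_induction Bf (pmap f \<circ> s) beta"
  using wf refinement_pmap[OF lattice_morphism_mono[OF f] c] pmap_Sup_p[OF f]
  unfolding wf_induction_def
  by (simp add: pmap_def lattice_morphism_bot[OF f] lattice_morphism_top[OF f] image_comp)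

lemma application_refinement_lift:
  assumes f: "lattice_morphism f" "surj f"
    and c: "Bf \<circ> pmap f = pmap f \<circ> B"
    and "reliable B p"
    and r: "leq_p (pmap f p) q" "leq_p q (Bf (pmap f p))"
  obtains p' where "refinement B p p'" "pmap f p' = q"
proof -
  have "Bf (pmap f p) = pmap f (B p)" using c by (metis comp_apply)
  with r have bounds: "f (fst p) \<le> fst q" "fst q \<le> f (fst (B p))"
      "f (snd (B p)) \<le> snd q" "snd q \<le> f (snd p)"
    unfolding leq_p_def pmap_def by auto
  have "fst p \<le> fst (B p)" "snd (B p) \<le> snd p"
    using \<open>reliable B p\<close> unfolding reliable_def leq_p_def by auto
  obtain x where "fst p \<le> x" "x \<le> fst (B p)" "f x = fst q"
    using lattice_morphism_interval_preimage[OF f \<open>fst p \<le> fst (B p)\<close> bounds(1,2)] .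
  moreover obtain y where "snd (B p) \<le> y" "y \<le> snd p" "f y = snd q"
    using lattice_morphism_interval_preimage[OF f \<open>snd (B p) \<le> snd p\<close> bounds(3,4)] .
  ultimately have "refinement B p (x, y)" "pmap f (x, y) = q"
    unfolding refinement_def leq_p_def pmap_def by auto
  then show ?thesis using that by blast
qed

lemma unfoundedness_refinement_lift:
  assumes f: "lattice_morphism f" "surj f"
    and c: "Bf \<circ> pmap f = pmap f \<circ> B"
    and mono: "\<And>p q. leq_p p q \<Longrightarrow> leq_p (B p) (B q)"
    and "reliable B (x, y)"
    and r: "snd (Bf (f x, v)) \<le> v" "v \<le> f y"
  obtains w where "refinement B (x, y) (x, w)" "f w = v"
proof -
  obtain w where w: "w \<le> y" "f w = v" and greatest: "\<And>z. z \<le> y \<Longrightarrow> f z \<le> v \<Longrightarrow> z \<le> w"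
    using lattice_morphism_greatest_preimage_below[OF f r(2)] by blast
  have "Bf (f x, v) = pmap f (B (x, w))"
    using fun_cong[OF c, of "(x, w)"] w(2) by (simp add: pmap_def)
  then have "f (snd (B (x, w))) = snd (Bf (f x, v))"
    by (simp add: pmap_def)
  with r(1) have "f (snd (B (x, w))) \<le> v" by simp
  moreover have "snd (B (x, w)) \<le> snd (B (x, y))"
    using mono[of "(x, y)" "(x, w)"] w(1) unfolding leq_p_def by simp
  with \<open>reliable B (x, y)\<close> have "snd (B (x, w)) \<le> y"
    unfolding reliable_def leq_p_def by (auto intro: order_trans)
  ultimately have "snd (B (x, w)) \<le> w" by (rule greatest[rotated])
  with w show ?thesis using that unfolding refinement_def by auto
qed

lemma strict_refinement_lift:
  assumes f: "lattice_morphism f" "surj f"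
    and c: "Bf \<circ> pmap f = pmap f \<circ> B"
    and mono: "\<And>p q. leq_p p q \<Longrightarrow> leq_p (B p) (B q)"
    and "reliable B p" and sr: "strict_refinement Bf (pmap f p) q"
  shows "\<exists>p'. strict_refinement B p p'"
proof -
  have "q \<noteq> pmap f p" using sr unfolding strict_refinement_def by simp
  then have strict: "p' \<noteq> p" if "pmap f p' = q" for p' using that by blast
  obtain x y where p: "p = (x, y)" by fastforce
  from sr consider "leq_p (pmap f p) q \<and> leq_p q (Bf (pmap f p))"
    | "fst q = f x \<and> snd (Bf (f x, snd q)) \<le> snd q \<and> snd q \<le> f y"
    unfolding strict_refinement_def refinement_def p pmap_def by auto
  then show ?thesis
  proof cases
    case 1
    then obtain p' where "refinement B p p'" "pmap f p' = q"
      using application_refinement_lift[OF f c \<open>reliable B p\<close>] by blast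
    then show ?thesis using strict unfolding strict_refinement_def by blast
  next
    case 2
    then obtain w where "refinement B p (x, w)" "f w = snd q"
      using unfoundedness_refinement_lift[OF f c mono] \<open>reliable B p\<close> p by blast
    moreover have "pmap f (x, w) = q" using 2 \<open>f w = snd q\<close> by (simp add: pmap_def prod_eq_iff)
    ultimately show ?thesis using strict unfolding strict_refinement_def p by blast
  qed
qed

theorem proposition3p3:
  fixes f :: "'a::complete_lattice \<Rightarrow> 'b::complete_lattice"
    and Op :: "'a \<Rightarrow> 'a"
    and A :: "'a \<times> 'a \<Rightarrow> 'a \<times> 'a"
    and Af :: "'b \<times> 'b \<Rightarrow> 'b \<times> 'b"
    and s :: "'i::wellorder \<Rightarrow> 'a \<times> 'a"
    and alpha :: "'i"
  assumes "lattice_morphism f" and "surj f"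
    and "approximator Op A"
    and "op_respects Op f" and "approx_respects A f"
    and "Af \<circ> pmap f = pmap f \<circ> A"
    and "wf_induction A s alpha"
  shows "wf_induction Af (pmap f \<circ> s) alpha \<and>
         (terminal_wf_induction A s alpha \<longrightarrow> terminal_wf_induction Af (pmap f \<circ> s) alpha)"
proof -
  have mono: "\<And>p q. leq_p p q \<Longrightarrow> leq_p (A p) (A q)"
    using \<open>approximator Op A\<close> unfolding approximator_def by blast
  have wf: "wf_induction Af (pmap f \<circ> s) alpha"
    using wf_induction_pmap assms by blast
  have "reliable A (s alpha)"
    using wf_induction_reliable[OF mono \<open>wf_induction A s alpha\<close>] by simp
  then have "(\<exists>q. strict_refinement Af (pmap f (s alpha)) q) \<Longrightarrow> \<exists>q. strict_refinement A (s alpha) q"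
    using strict_refinement_lift[OF assms(1,2,6) mono] by blast
  with wf show ?thesis unfolding terminal_wf_induction_def by auto
qed

end
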